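(* Let $G$ be a finite simple graph with $n$ vertices that has an efficient dominating set. Then $\mathcal{C}^{min}(G)=n-\gamma(G)$.
   Context: A set $D\subseteq V(G)$ is a dominating set of $G$ if every vertex of $V(G)\setminus D$ has a neighbor in $D$; $\gamma(G)$ is the minimum cardinality of a dominating set, and dominating sets of that cardinality are called $\gamma$-sets. A dominating set $D$ is efficient if every vertex of $V(G)\setminus D$ is adjacent to exactly one vertex of $D$ and no vertex of $D$ is adjacent to another vertex of $D$. For $D\subseteq V(G)$, $\mathcal{C}_D(G)=\sum_{u\in D}\deg_G(u)$, and $\mathcal{C}^{min}(G)=\min\{\mathcal{C}_D(G): D \text{ a } \gamma\text{-set of } G\}$. *)

theory Defs
  imports Main
begin

definition simple_graph :: "'a set \<Rightarrow> ('a \<Rightarrow> 'a \<Rightarrow> bool) \<Rightarrow> bool" where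
  "simple_graph V E \<longleftrightarrow> finite V \<and> (\<forall>u v. E u v \<longrightarrow> u \<in> V \<and> v \<in> V)
     \<and> (\<forall>u v. E u v \<longrightarrow> E v u) \<and> (\<forall>v. \<not> E v v)"

definition nbhd :: "'a set \<Rightarrow> ('a \<Rightarrow> 'a \<Rightarrow> bool) \<Rightarrow> 'a \<Rightarrow> 'a set" where
  "nbhd V E v = {u \<in> V. E v u}"

definition degree :: "'a set \<Rightarrow> ('a \<Rightarrow> 'a \<Rightarrow> bool) \<Rightarrow> 'a \<Rightarrow> nat" where
  "degree V E v = card (nbhd V E v)"

definition dominating_set :: "'a set \<Rightarrow> ('a \<Rightarrow> 'a \<Rightarrow> bool) \<Rightarrow> 'a set \<Rightarrow> bool" where
  "dominating_set V E D \<longleftrightarrow> D \<subseteq> V \<and> (\<forall>v \<in> V - D. \<exists>u \<in> D. E v u)"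

definition domination_number :: "'a set \<Rightarrow> ('a \<Rightarrow> 'a \<Rightarrow> bool) \<Rightarrow> nat" where
  "domination_number V E = (LEAST k. \<exists>D. dominating_set V E D \<and> card D = k)"

definition gamma_set :: "'a set \<Rightarrow> ('a \<Rightarrow> 'a \<Rightarrow> bool) \<Rightarrow> 'a set \<Rightarrow> bool" where
  "gamma_set V E D \<longleftrightarrow> dominating_set V E D \<and> card D = domination_number V E"

definition efficient_dominating_set :: "'a set \<Rightarrow> ('a \<Rightarrow> 'a \<Rightarrow> bool) \<Rightarrow> 'a set \<Rightarrow> bool" where
  "efficient_dominating_set V E D \<longleftrightarrow> dominating_set V E D
     \<and> (\<forall>v \<in> V - D. card {u \<in> D. E v u} = 1)
     \<and> (\<forall>u \<in> D. \<forall>w \<in> D. \<not> E u w)"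

definition cost :: "'a set \<Rightarrow> ('a \<Rightarrow> 'a \<Rightarrow> bool) \<Rightarrow> 'a set \<Rightarrow> nat" where
  "cost V E D = (\<Sum>u\<in>D. degree V E u)"

definition cost_min :: "'a set \<Rightarrow> ('a \<Rightarrow> 'a \<Rightarrow> bool) \<Rightarrow> nat" where
  "cost_min V E = (LEAST c. \<exists>D. gamma_set V E D \<and> cost V E D = c)"

end

theory Submission
  imports Defs
begin

(* In an efficient dominating set D the closed neighbourhoods of the vertices of D partition V.
   Hence any dominating set needs a distinct vertex in each of them, so D is a gamma-set, and the
   open neighbourhoods of D partition V - D, so D costs exactly |V| - gamma. Conversely every
   dominating set S costs at least |V - S|, because its open neighbourhoods cover V - S. *)

lemma simple_graph_sym: "simple_graph V E \<Longrightarrow> E u v \<Longrightarrow> E v u"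
  by (simp add: simple_graph_def)

lemma simple_graph_edge_in_V: "simple_graph V E \<Longrightarrow> E u v \<Longrightarrow> u \<in> V \<and> v \<in> V"
  by (simp add: simple_graph_def)

lemma dominating_set_finite: "simple_graph V E \<Longrightarrow> dominating_set V E S \<Longrightarrow> finite S"
  by (meson dominating_set_def finite_subset simple_graph_def)

lemma efficient_dominating_set_closed_nbhds_disjoint:
  assumes g: "simple_graph V E" and D: "efficient_dominating_set V E D"
    and u: "u \<in> D" and w: "w \<in> D"
    and su: "s = u \<or> E u s" and sw: "s = w \<or> E w s"
  shows "u = w"
proof -
  have indep: "\<And>x y. x \<in> D \<Longrightarrow> y \<in> D \<Longrightarrow> \<not> E x y"
    using D by (simp add: efficient_dominating_set_def)
  show ?thesis
  proof (cases "s \<in> D")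
    case True
    then have "s = u" "s = w" using su sw indep u w by blast+
    then show ?thesis by simp
  next
    case False
    then have "E u s" "E w s" using su sw u w by auto
    then have "s \<in> V - D" "E s u" "E s w"
      using False simple_graph_edge_in_V[OF g] simple_graph_sym[OF g] by auto
    then have "card {x \<in> D. E s x} = 1" using D by (simp add: efficient_dominating_set_def)
    then obtain z where z: "{x \<in> D. E s x} = {z}" by (rule card_1_singletonE)
    have "u \<in> {x \<in> D. E s x}" "w \<in> {x \<in> D. E s x}" using u w \<open>E s u\<close> \<open>E s w\<close> by auto
    then show ?thesis unfolding z by simp
  qed
qed

lemma dominating_set_card_diff_le_cost:
  assumes g: "simple_graph V E" and S: "dominating_set V E S"
  shows "card V - card S \<le> cost V E S"
proof -
  have fV: "finite V" using g by (simp add: simple_graph_def)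
  have SV: "S \<subseteq> V" using S by (simp add: dominating_set_def)
  have fS: "finite S" using dominating_set_finite[OF g S] .
  have cover: "V - S \<subseteq> (\<Union>u\<in>S. nbhd V E u)"
    using S simple_graph_sym[OF g] by (fastforce simp: dominating_set_def nbhd_def)
  have "card V - card S = card (V - S)" using fS SV by (simp add: card_Diff_subset)
  also have "\<dots> \<le> card (\<Union>u\<in>S. nbhd V E u)"
    using cover fV by (intro card_mono) (auto simp: nbhd_def intro: rev_finite_subset[OF fV])
  also have "\<dots> \<le> (\<Sum>u\<in>S. card (nbhd V E u))" using card_UN_le[OF fS] .
  finally show ?thesis by (simp add: cost_def degree_def)
qed

lemma efficient_dominating_set_card_le:
  assumes g: "simple_graph V E" and D: "efficient_dominating_set V E D"
    and S: "dominating_set V E S"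
  shows "card D \<le> card S"
proof -
  have DV: "D \<subseteq> V" using D by (simp add: efficient_dominating_set_def dominating_set_def)
  have "\<forall>u\<in>D. \<exists>s. s \<in> S \<and> (s = u \<or> E u s)"
    using S DV by (auto simp: dominating_set_def)
  then obtain f where f: "\<forall>u\<in>D. f u \<in> S \<and> (f u = u \<or> E u (f u))"
    by (rule bchoice[THEN exE])
  have "inj_on f D"
    by (rule inj_onI) (metis f efficient_dominating_set_closed_nbhds_disjoint[OF g D])
  moreover have "f ` D \<subseteq> S" using f by blast
  ultimately show ?thesis using card_inj_on_le dominating_set_finite[OF g S] by blast
qed

lemma efficient_dominating_set_cost:
  assumes g: "simple_graph V E" and D: "efficient_dominating_set V E D"
  shows "cost V E D = card V - card D"
proof -
  have fV: "finite V" using g by (simp add: simple_graph_def)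
  have DV: "D \<subseteq> V" using D by (simp add: efficient_dominating_set_def dominating_set_def)
  have fD: "finite D" using fV DV finite_subset by blast
  have indep: "\<And>x y. x \<in> D \<Longrightarrow> y \<in> D \<Longrightarrow> \<not> E x y"
    using D by (simp add: efficient_dominating_set_def)
  have dom: "\<And>v. v \<in> V - D \<Longrightarrow> \<exists>u\<in>D. E v u"
    using D by (simp add: efficient_dominating_set_def dominating_set_def)
  have partition: "(\<Union>u\<in>D. nbhd V E u) = V - D"
  proof
    show "(\<Union>u\<in>D. nbhd V E u) \<subseteq> V - D" using indep by (auto simp: nbhd_def)
    show "V - D \<subseteq> (\<Union>u\<in>D. nbhd V E u)"
      using dom simple_graph_sym[OF g] by (force simp: nbhd_def)
  qed
  have disjoint: "nbhd V E u \<inter> nbhd V E w = {}" if "u \<in> D" "w \<in> D" "u \<noteq> w" for u w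
    using that efficient_dominating_set_closed_nbhds_disjoint[OF g D that(1,2)]
    unfolding nbhd_def by blast
  have "cost V E D = (\<Sum>u\<in>D. card (nbhd V E u))" by (simp add: cost_def degree_def)
  also have "\<dots> = card (\<Union>u\<in>D. nbhd V E u)"
    using fD fV disjoint by (intro card_UN_disjoint[symmetric]) (auto simp: nbhd_def)
  also have "\<dots> = card V - card D" using partition DV fD by (simp add: card_Diff_subset)
  finally show ?thesis .
qed

lemma gamma_set_exists:
  assumes "dominating_set V E D"
  obtains S where "gamma_set V E S"
  using LeastI[of "\<lambda>k. \<exists>S. dominating_set V E S \<and> card S = k" "card D"] assms
  by (auto simp: gamma_set_def domination_number_def)

lemma domination_number_le_card:
  "dominating_set V E D \<Longrightarrow> domination_number V E \<le> card D"
  unfolding domination_number_def by (rule Least_le) blast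

lemma efficient_dominating_set_gamma_set:
  assumes g: "simple_graph V E" and D: "efficient_dominating_set V E D"
  shows "gamma_set V E D"
proof -
  have Ddom: "dominating_set V E D" using D by (simp add: efficient_dominating_set_def)
  obtain S where S: "gamma_set V E S" using gamma_set_exists[OF Ddom] .
  have "card D \<le> card S"
    using S efficient_dominating_set_card_le[OF g D] unfolding gamma_set_def by blast
  also have "\<dots> = domination_number V E" using S unfolding gamma_set_def by blast
  finally show ?thesis
    using Ddom domination_number_le_card[OF Ddom] by (simp add: gamma_set_def)
qed

lemma gamma_set_cost_ge:
  assumes "simple_graph V E" and "gamma_set V E S"
  shows "card V - domination_number V E \<le> cost V E S"
  using assms dominating_set_card_diff_le_cost unfolding gamma_set_def by metis

theorem mainTheorem3:
  fixes V :: "'a set" and E :: "'a \<Rightarrow> 'a \<Rightarrow> bool"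
  assumes "simple_graph V E"
    and "\<exists>D. efficient_dominating_set V E D"
  shows "cost_min V E = card V - domination_number V E"
proof -
  obtain D where D: "efficient_dominating_set V E D" using assms(2) by blast
  have gD: "gamma_set V E D" using efficient_dominating_set_gamma_set[OF assms(1) D] .
  then have "cost V E D = card V - domination_number V E"
    using efficient_dominating_set_cost[OF assms(1) D] by (simp add: gamma_set_def)
  then show ?thesis
    unfolding cost_min_def using gD gamma_set_cost_ge[OF assms(1)]
    by (intro Least_equality) blast+
qed

end
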